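(* For $m,k$ let $E(m,k)$ be the event that there is a subset $U\subset V_n$ with $|U|=m$ and $|U^{*2}|\ge k$. Then there is an increasing positive function $\varepsilon_3(\cdot)$ and a constant $C_3=C_3(r)$ such that for every $\eta>0$ and every $m\le\varepsilon_3(\eta)n$, $$\mathbb P\left[E(m,(1+\eta)m)\right]\le C_3\exp\left(-\frac{\eta^2}{8r}\,m\log(n/m)\right).$$
   Context: Fix an integer $r\ge3$, let $V_n=\{1,\dots,n\}$ with $rn$ even, and let $\mathbb P$ be the law of the random multigraph $G_n$ on $V_n$ obtained by giving each vertex $r$ half-edges and pairing all $rn$ half-edges uniformly at random. Write $y\sim x$ if $y$ and $x$ are joined by an edge of $G_n$. For $U\subset V_n$, $U^{*2}:=\{y\in V_n: y\sim x\text{ and }y\sim z\text{ for some }x,z\in U\text{ with }x\ne z\}$ (it may contain vertices of $U$). *)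

theory Defs
  imports "HOL-Probability.Probability"
begin

text \<open>Configuration model: vertex x in {1..n} carries half-edges (x,i), i < r.
  A configuration is a perfect matching of the half-edges, encoded as a
  fixed-point-free involution on the half-edge set (identity outside it).\<close>

definition half_edges :: "nat \<Rightarrow> nat \<Rightarrow> (nat \<times> nat) set" where
  "half_edges n r = {1..n} \<times> {..<r}"

definition pairings :: "nat \<Rightarrow> nat \<Rightarrow> ((nat \<times> nat) \<Rightarrow> (nat \<times> nat)) set" where
  "pairings n r = {f. (\<forall>h\<in>half_edges n r. f h \<in> half_edges n r \<and> f h \<noteq> h \<and> f (f h) = h)
                     \<and> (\<forall>h. h \<notin> half_edges n r \<longrightarrow> f h = h)}"

text \<open>y ~ x in the multigraph G(f): some half-edge of y is paired with some half-edge of x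
  (a loop at x arises when two distinct half-edges of x are paired).\<close>
definition adj :: "nat \<Rightarrow> nat \<Rightarrow> ((nat \<times> nat) \<Rightarrow> (nat \<times> nat)) \<Rightarrow> nat \<Rightarrow> nat \<Rightarrow> bool" where
  "adj n r f y x = (\<exists>i<r. \<exists>j<r. y \<in> {1..n} \<and> x \<in> {1..n} \<and> f (y, i) = (x, j))"

definition star2 :: "nat \<Rightarrow> nat \<Rightarrow> ((nat \<times> nat) \<Rightarrow> (nat \<times> nat)) \<Rightarrow> nat set \<Rightarrow> nat set" where
  "star2 n r f U = {y \<in> {1..n}. \<exists>x\<in>U. \<exists>z\<in>U. x \<noteq> z \<and> adj n r f y x \<and> adj n r f y z}"

definition event_E :: "nat \<Rightarrow> nat \<Rightarrow> nat \<Rightarrow> real \<Rightarrow> ((nat \<times> nat) \<Rightarrow> (nat \<times> nat)) set" where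
  "event_E n r m k = {f. \<exists>U \<subseteq> {1..n}. card U = m \<and> real (card (star2 n r f U)) \<ge> k}"

definition config_model :: "nat \<Rightarrow> nat \<Rightarrow> ((nat \<times> nat) \<Rightarrow> (nat \<times> nat)) pmf" where
  "config_model n r = pmf_of_set (pairings n r)"

end

theory Submission
  imports Defs "HOL-Combinatorics.Transposition"
begin

text \<open>
  Suppose an \<open>m\<close>-set \<open>U\<close> has \<open>|U\<^sup>*\<^sup>2| \<ge> k\<close>. Pick \<open>k\<close> vertices \<open>W\<close> of \<open>U\<^sup>*\<^sup>2\<close> and at each
  of them two half-edges matched into \<open>U\<close>; closing these \<open>2k\<close> half-edges under the pairing
  gives at least \<open>4k - 2|W \<inter> U|\<close> half-edges at the vertices \<open>S = U \<union> W\<close>, hence a partial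
  matching of \<open>|S| + (k - m)\<close> pairs among the half-edges of \<open>S\<close>. A fixed partial matching
  with \<open>e\<close> pairs lies in a uniform perfect matching of \<open>N\<close> half-edges with probability
  \<open>1 / \<Prod>i<e. (N - 1 - 2i) \<le> (2/N)\<^sup>e\<close>. A union bound over all \<open>(S, M)\<close> and crude binomial
  estimates give \<open>D\<^sup>m (m/n)\<^bsup>\<eta>m\<^esup>\<close> for \<open>k = \<lceil>(1+\<eta>)m\<rceil>\<close>, with \<open>D = witness_bound_base r\<close>;
  this is at most \<open>(m/n)\<^bsup>\<eta>m/2\<^esup> \<le> (m/n)\<^bsup>\<eta>\<^sup>2m/(8r)\<^esup>\<close> once \<open>m/n \<le> D\<^bsup>-2/\<eta>\<^esup>\<close>. For
  \<open>\<eta> > r\<close> the event is empty, as \<open>|U\<^sup>*\<^sup>2| \<le> rm\<close>.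
\<close>

section \<open>Perfect matchings\<close>

definition perfect_matchings :: "'a set \<Rightarrow> ('a \<Rightarrow> 'a) set" where
  "perfect_matchings A =
     {f. (\<forall>h\<in>A. f h \<in> A \<and> f h \<noteq> h \<and> f (f h) = h) \<and> (\<forall>h. h \<notin> A \<longrightarrow> f h = h)}"

lemma perfect_matchings_involution: "f \<in> perfect_matchings A \<Longrightarrow> f (f h) = h"
  by (cases "h \<in> A") (auto simp: perfect_matchings_def)

lemma perfect_matchings_inj: "f \<in> perfect_matchings A \<Longrightarrow> inj f"
  by (metis injI perfect_matchings_involution)

lemma perfect_matchings_permutes:
  assumes f: "f \<in> perfect_matchings A"
  shows "f permutes A"
  unfolding permutes_def
proof (intro conjI allI impI)
  show "f x = x" if "x \<notin> A" for x
    using f that by (simp add: perfect_matchings_def)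
  show "\<exists>!x. f x = y" for y
    by (rule ex1I[of _ "f y"]) (metis f perfect_matchings_involution)+
qed

lemma finite_perfect_matchings: "finite A \<Longrightarrow> finite (perfect_matchings A)"
  by (rule finite_subset[OF _ finite_permutations]) (auto intro: perfect_matchings_permutes)

lemma perfect_matchings_nonempty: "finite A \<Longrightarrow> even (card A) \<Longrightarrow> perfect_matchings A \<noteq> {}"
proof (induction "card A" arbitrary: A rule: less_induct)
  case less
  show ?case
  proof (cases "A = {}")
    case True
    then have "id \<in> perfect_matchings A" by (simp add: perfect_matchings_def)
    then show ?thesis by blast
  next
    case False
    then have "card A \<noteq> 0"
      using less.prems(1) by simp
    moreover have "card A \<noteq> 1"
      using less.prems(2) by auto
    ultimately have "2 \<le> card A"
      by linarith
    then obtain B where B: "B \<subseteq> A" "card B = 2"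
      using obtain_subset_with_card_n by metis
    then obtain a b where "B = {a, b}" "a \<noteq> b"
      by (meson card_2_iff)
    with B(1) have ab: "a \<in> A" "b \<in> A" "a \<noteq> b"
      by auto
    let ?B = "A - {a, b}"
    have "card ?B = card A - 2"
      using ab less.prems(1) by (simp add: card_Diff_subset)
    then have "card ?B < card A" "even (card ?B)"
      using \<open>2 \<le> card A\<close> less.prems(2) by auto
    then obtain g where "g \<in> perfect_matchings ?B"
      using less.hyps less.prems(1) by blast
    then have gB: "\<And>h. h \<in> ?B \<Longrightarrow> g h \<in> ?B \<and> g h \<noteq> h \<and> g (g h) = h"
        "\<And>h. h \<notin> ?B \<Longrightarrow> g h = h"
      unfolding perfect_matchings_def by blast+
    let ?f = "g(a := b, b := a)"
    have "\<forall>h\<in>A. ?f h \<in> A \<and> ?f h \<noteq> h \<and> ?f (?f h) = h"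
    proof
      fix h assume "h \<in> A"
      then show "?f h \<in> A \<and> ?f h \<noteq> h \<and> ?f (?f h) = h"
        using gB(1)[of h] ab by (cases "h \<in> ?B") auto
    qed
    moreover have "\<forall>h. h \<notin> A \<longrightarrow> ?f h = h"
      using gB(2) ab by auto
    ultimately have "?f \<in> perfect_matchings A"
      by (simp add: perfect_matchings_def)
    then show ?thesis by blast
  qed
qed

lemma transpose_conj_perfect_matchings:
  assumes "b \<in> A" "c \<in> A" and f: "f \<in> perfect_matchings A"
  shows "Transposition.transpose b c \<circ> f \<circ> Transposition.transpose b c \<in> perfect_matchings A"
proof -
  let ?t = "Transposition.transpose b c"
  have t: "?t h \<in> A \<longleftrightarrow> h \<in> A" for h
    using assms(1,2) by (auto simp: Transposition.transpose_def)
  have "\<forall>h\<in>A. (?t \<circ> f \<circ> ?t) h \<in> A \<and> (?t \<circ> f \<circ> ?t) h \<noteq> h \<and>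
      (?t \<circ> f \<circ> ?t) ((?t \<circ> f \<circ> ?t) h) = h"
  proof
    fix h assume "h \<in> A"
    then have "f (?t h) \<in> A" "f (?t h) \<noteq> ?t h" "f (f (?t h)) = ?t h"
      using f t by (auto simp: perfect_matchings_def)
    then show "(?t \<circ> f \<circ> ?t) h \<in> A \<and> (?t \<circ> f \<circ> ?t) h \<noteq> h \<and>
        (?t \<circ> f \<circ> ?t) ((?t \<circ> f \<circ> ?t) h) = h"
      using t by (metis comp_apply transpose_involutory)
  qed
  moreover have "\<forall>h. h \<notin> A \<longrightarrow> (?t \<circ> f \<circ> ?t) h = h"
  proof (intro allI impI)
    fix h assume "h \<notin> A"
    moreover from this have "h \<noteq> b" "h \<noteq> c"
      using assms(1,2) by auto
    ultimately show "(?t \<circ> f \<circ> ?t) h = h"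
      using f by (simp add: perfect_matchings_def)
  qed
  ultimately show ?thesis
    by (simp add: perfect_matchings_def)
qed

section \<open>Partial matchings inside a random perfect matching\<close>

definition pair_support :: "('a \<times> 'a) set \<Rightarrow> 'a set" where
  "pair_support M = fst ` M \<union> snd ` M"

definition disjoint_pairs :: "('a \<times> 'a) set \<Rightarrow> bool" where
  "disjoint_pairs M \<longleftrightarrow> (\<forall>p\<in>M. fst p \<noteq> snd p) \<and>
     (\<forall>p\<in>M. \<forall>q\<in>M. p \<noteq> q \<longrightarrow> {fst p, snd p} \<inter> {fst q, snd q} = {})"

definition matchings_containing :: "'a set \<Rightarrow> ('a \<times> 'a) set \<Rightarrow> ('a \<Rightarrow> 'a) set" where
  "matchings_containing A M = {f \<in> perfect_matchings A. \<forall>(a, b)\<in>M. f a = b}"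

lemma disjoint_pairs_insert:
  assumes "(a, b) \<notin> M"
  shows "disjoint_pairs (insert (a, b) M) \<longleftrightarrow>
    disjoint_pairs M \<and> a \<noteq> b \<and> a \<notin> pair_support M \<and> b \<notin> pair_support M"
  using assms unfolding disjoint_pairs_def pair_support_def by (auto 0 4 simp: image_iff)

lemma disjoint_pairs_subset: "disjoint_pairs M \<Longrightarrow> M' \<subseteq> M \<Longrightarrow> disjoint_pairs M'"
  unfolding disjoint_pairs_def by blast

lemma card_pair_support:
  "finite M \<Longrightarrow> disjoint_pairs M \<Longrightarrow> card (pair_support M) = 2 * card M"
proof (induction M rule: finite_induct)
  case empty
  then show ?case by (simp add: pair_support_def)
next
  case (insert p M)
  obtain a b where p: "p = (a, b)" by fastforce
  have "pair_support (insert p M) = insert a (insert b (pair_support M))"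
    by (auto simp: pair_support_def p)
  moreover have "finite (pair_support M)"
    using insert.hyps(1) by (simp add: pair_support_def)
  ultimately show ?case
    using insert disjoint_pairs_insert[of a b M] p by auto
qed

lemma matchings_containing_partner:
  assumes f: "f \<in> matchings_containing A M" and a: "a \<in> A" "a \<notin> pair_support M"
  shows "f a \<in> A - pair_support M - {a}"
proof -
  have pm: "f \<in> perfect_matchings A" and fM: "\<And>x y. (x, y) \<in> M \<Longrightarrow> f x = y"
    using f by (auto simp: matchings_containing_def)
  have "f a \<in> A" "f a \<noteq> a"
    using pm a(1) by (auto simp: perfect_matchings_def)
  moreover have "f a \<notin> pair_support M"
  proof
    assume "f a \<in> pair_support M"
    then obtain x y where xy: "(x, y) \<in> M" "f a = x \<or> f a = y"
      by (auto simp: pair_support_def)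
    then have "a = y \<or> a = x"
      using fM[OF xy(1)] perfect_matchings_involution[OF pm] by metis
    then show False
      using a(2) xy(1) by (force simp: pair_support_def)
  qed
  ultimately show ?thesis by blast
qed

lemma transpose_conj_matchings_containing:
  assumes f: "f \<in> matchings_containing A M"
    and c: "c \<in> A - pair_support M" and d: "d \<in> A - pair_support M"
  shows "Transposition.transpose c d \<circ> f \<circ> Transposition.transpose c d \<in> matchings_containing A M"
proof -
  have "(Transposition.transpose c d \<circ> f \<circ> Transposition.transpose c d) x = y"
    if "(x, y) \<in> M" for x y
  proof -
    have "x \<in> pair_support M" "y \<in> pair_support M"
      using that by (force simp: pair_support_def)+
    then have "x \<notin> {c, d}" "y \<notin> {c, d}"
      using c d by auto
    moreover have "f x = y"
      using f that by (auto simp: matchings_containing_def)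
    ultimately show ?thesis by simp
  qed
  then show ?thesis
    using f c d transpose_conj_perfect_matchings by (auto simp: matchings_containing_def)
qed

lemma card_matchings_containing_insert:
  assumes A: "finite A" and ab: "a \<in> A" "b \<in> A" "a \<noteq> b"
    and M: "a \<notin> pair_support M" "b \<notin> pair_support M"
  shows "card (matchings_containing A M) =
    card (A - pair_support M - {a}) * card (matchings_containing A (insert (a, b) M))"
proof -
  let ?C = "A - pair_support M - {a}"
  define F where "F c = {f \<in> matchings_containing A M. f a = c}" for c
  have "F c \<subseteq> perfect_matchings A" for c
    by (auto simp: F_def matchings_containing_def)
  then have finite_F: "finite (F c)" for c
    using finite_perfect_matchings[OF A] finite_subset by blast
  \<comment> \<open>conjugating by the transposition of \<open>c\<close> and \<open>b\<close> moves the partner of \<open>a\<close> from \<open>c\<close> to \<open>b\<close>\<close>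
  have "bij_betw (\<lambda>f. Transposition.transpose c b \<circ> f \<circ> Transposition.transpose c b) (F c) (F b)"
    if c: "c \<in> ?C" for c
  proof (rule bij_betw_byWitness[where
        f' = "\<lambda>f. Transposition.transpose c b \<circ> f \<circ> Transposition.transpose c b"])
    have "c \<in> A - pair_support M" "b \<in> A - pair_support M" "a \<noteq> c"
      using ab M c by auto
    then show "(\<lambda>f. Transposition.transpose c b \<circ> f \<circ> Transposition.transpose c b) ` F c \<subseteq> F b"
      "(\<lambda>f. Transposition.transpose c b \<circ> f \<circ> Transposition.transpose c b) ` F b \<subseteq> F c"
      using ab(3) by (auto simp: F_def intro: transpose_conj_matchings_containing)
  qed (auto simp: fun_eq_iff)
  then have card_F: "card (F c) = card (F b)" if "c \<in> ?C" for c
    using that bij_betw_same_card by blast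
  have fibres: "matchings_containing A M = (\<Union>c\<in>?C. F c)"
    using matchings_containing_partner[OF _ ab(1) M(1)] by (auto simp: F_def)
  have "card (matchings_containing A M) = (\<Sum>c\<in>?C. card (F c))"
    unfolding fibres by (rule card_UN_disjoint) (use A finite_F in \<open>auto simp: F_def\<close>)
  also have "\<dots> = card ?C * card (F b)"
    using card_F by simp
  also have "F b = matchings_containing A (insert (a, b) M)"
    by (auto simp: F_def matchings_containing_def)
  finally show ?thesis .
qed

lemma card_perfect_matchings_eq:
  assumes A: "finite A"
  shows "finite M \<Longrightarrow> disjoint_pairs M \<Longrightarrow> pair_support M \<subseteq> A \<Longrightarrow>
    card (perfect_matchings A) = card (matchings_containing A M) * (\<Prod>i<card M. card A - 1 - 2 * i)"
proof (induction M rule: finite_induct)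
  case empty
  then show ?case by (simp add: matchings_containing_def)
next
  case (insert p M)
  obtain a b where p: "p = (a, b)" by fastforce
  have M: "disjoint_pairs M" "a \<noteq> b" "a \<notin> pair_support M" "b \<notin> pair_support M"
    using insert.prems(1) insert.hyps(2) disjoint_pairs_insert[of a b M] p by auto
  have sub: "pair_support M \<subseteq> A" "a \<in> A" "b \<in> A"
    using insert.prems(2) p by (auto simp: pair_support_def)
  have "card (A - pair_support M - {a}) = card A - 1 - 2 * card M"
    using sub M A card_pair_support[OF insert.hyps(1) M(1)]
    by (simp add: card_Diff_subset finite_subset)
  then have "card (matchings_containing A M) =
      (card A - 1 - 2 * card M) * card (matchings_containing A (insert p M))"
    using card_matchings_containing_insert[OF A sub(2,3) M(2-4)] p by simp
  then show ?case
    using insert.IH[OF M(1) sub(1)] insert.hyps by (simp add: ac_simps)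
qed

lemma prob_matchings_containing_le:
  assumes A: "finite A" "even (card A)"
    and M: "finite M" "disjoint_pairs M" "pair_support M \<subseteq> A" "4 * card M \<le> card A"
  shows "measure_pmf.prob (pmf_of_set (perfect_matchings A)) (matchings_containing A M)
    \<le> (2 / card A) ^ card M"
proof -
  define P where "P = (\<Prod>i<card M. card A - 1 - 2 * i)"
  have count: "card (perfect_matchings A) = card (matchings_containing A M) * P"
    unfolding P_def using card_perfect_matchings_eq[OF A(1) M(1-3)] .
  have "card (perfect_matchings A) > 0"
    using perfect_matchings_nonempty[OF A] finite_perfect_matchings[OF A(1)] card_gt_0_iff by blast
  then have "card (matchings_containing A M) > 0" "P > 0"
    using count by auto
  moreover have "perfect_matchings A \<inter> matchings_containing A M = matchings_containing A M"
    by (auto simp: matchings_containing_def)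
  ultimately have prob: "measure_pmf.prob (pmf_of_set (perfect_matchings A)) (matchings_containing A M)
      = 1 / P"
    using perfect_matchings_nonempty[OF A] finite_perfect_matchings[OF A(1)] count
    by (simp add: measure_pmf_of_set)
  have "(card A / 2) ^ card M = (\<Prod>i<card M. real (card A) / 2)"
    by simp
  also have "\<dots> \<le> (\<Prod>i<card M. real (card A - 1 - 2 * i))"
  proof (rule prod_mono)
    fix i assume "i \<in> {..<card M}"
    then have "2 * i + 1 \<le> card A" "real (card A) - 1 - 2 * real i \<ge> real (card A) / 2"
      using M(4) by auto
    then show "0 \<le> real (card A) / 2 \<and> real (card A) / 2 \<le> real (card A - 1 - 2 * i)"
      by (simp add: of_nat_diff)
  qed
  also have "\<dots> = P"
    by (simp add: P_def)
  finally have le: "(card A / 2) ^ card M \<le> P" .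
  have "(card A / 2) ^ card M > (0 :: real)"
    using M(4) by (cases "card M = 0") auto
  then have "1 / P \<le> 1 / (card A / 2) ^ card M"
    using le by (intro divide_left_mono) auto
  then show ?thesis
    using prob by (simp add: power_divide)
qed

lemma card_Un_image_ge:
  assumes "inj f" "finite H" "f ` H \<subseteq> B"
  shows "2 * card H \<le> card (H \<union> f ` H) + card (H \<inter> B)"
proof -
  have "card H + card (f ` H) = card (H \<union> f ` H) + card (H \<inter> f ` H)"
    using assms(2) by (intro card_Un_Int) auto
  moreover have "card (f ` H) = card H"
    using assms(1) by (simp add: card_image inj_on_subset)
  moreover have "card (H \<inter> f ` H) \<le> card (H \<inter> B)"
    using assms(2,3) by (intro card_mono) auto
  ultimately show ?thesis
    by linarith
qed

lemma involution_orbit_pairs: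
  assumes "finite T" "\<forall>h\<in>T. f h \<in> T \<and> f h \<noteq> h \<and> f (f h) = h"
  shows "\<exists>M \<subseteq> T \<times> T. disjoint_pairs M \<and> card T = 2 * card M \<and> (\<forall>(a, b)\<in>M. f a = b)"
  using assms
proof (induction T rule: finite_psubset_induct)
  case (psubset T)
  show ?case
  proof (cases "T = {}")
    case True
    then show ?thesis
      by (intro exI[of _ "{}"]) (simp add: disjoint_pairs_def)
  next
    case False
    then obtain h where h: "h \<in> T" by blast
    let ?T = "T - {h, f h}"
    have fh: "f h \<in> T" "f h \<noteq> h" "f (f h) = h"
      using psubset.prems h by blast+
    have closed: "\<forall>x\<in>?T. f x \<in> ?T \<and> f x \<noteq> x \<and> f (f x) = x"
    proof
      fix x assume x: "x \<in> ?T"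
      then have "f x \<in> T" "f x \<noteq> x" "f (f x) = x"
        using psubset.prems by blast+
      moreover have "f x \<noteq> h" "f x \<noteq> f h"
        using x \<open>f (f x) = x\<close> fh(3) by (metis Diff_iff insertCI)+
      ultimately show "f x \<in> ?T \<and> f x \<noteq> x \<and> f (f x) = x" by blast
    qed
    have "?T \<subset> T"
      using h by blast
    then obtain M where M: "M \<subseteq> ?T \<times> ?T" "disjoint_pairs M" "card ?T = 2 * card M"
        "\<forall>(a, b)\<in>M. f a = b"
      using psubset.IH[OF _ closed] by blast
    have new: "h \<notin> pair_support M" "f h \<notin> pair_support M" "(h, f h) \<notin> M"
      using M(1) by (auto simp: pair_support_def)
    then have "disjoint_pairs (insert (h, f h) M)"
      using M(2) fh(2) disjoint_pairs_insert by metis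
    moreover have "card T = 2 * card (insert (h, f h) M)"
    proof -
      have "{h, f h} \<subseteq> T" "card {h, f h} = 2"
        using h fh(1,2) by auto
      then have "card ?T = card T - 2" "card T \<ge> 2"
        using psubset.hyps by (metis card_Diff_subset finite.emptyI finite.insertI, metis card_mono)
      moreover have "finite M"
        using finite_subset[OF M(1)] psubset.hyps by blast
      ultimately show ?thesis
        using M(3) new(3) by simp
    qed
    moreover have "insert (h, f h) M \<subseteq> T \<times> T"
      using M(1) h fh(1) by blast
    ultimately show ?thesis
      using M(4) fh(3) by (intro exI[of _ "insert (h, f h) M"]) simp
  qed
qed

section \<open>The configuration model\<close>

lemma pairings_eq_perfect_matchings: "pairings n r = perfect_matchings (half_edges n r)"
  by (simp add: pairings_def perfect_matchings_def)

lemma card_half_edges: "card (half_edges n r) = n * r"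
  by (simp add: half_edges_def card_cartesian_product)

lemma event_E_ceiling: "event_E n r m x = event_E n r m (nat \<lceil>x\<rceil>)"
  by (simp add: event_E_def nat_le_iff ceiling_le_iff)

lemma set_pmf_config_model:
  assumes "even (r * n)"
  shows "set_pmf (config_model n r) = pairings n r"
proof -
  have "finite (half_edges n r)" "even (card (half_edges n r))"
    using assms by (simp_all add: half_edges_def card_half_edges mult.commute)
  then show ?thesis
    by (simp add: config_model_def pairings_eq_perfect_matchings perfect_matchings_nonempty
        finite_perfect_matchings)
qed

lemma card_star2_le:
  assumes f: "f \<in> perfect_matchings (half_edges n r)" and U: "finite U"
  shows "card (star2 n r f U) \<le> r * card U"
proof -
  have "star2 n r f U \<subseteq> (\<lambda>h. fst (f h)) ` (U \<times> {..<r})"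
  proof
    fix y assume "y \<in> star2 n r f U"
    then obtain x i j where "x \<in> U" "i < r" "j < r" "f (y, i) = (x, j)"
      unfolding star2_def adj_def by blast
    moreover from this have "f (x, j) = (y, i)"
      using perfect_matchings_involution[OF f] by metis
    ultimately show "y \<in> (\<lambda>h. fst (f h)) ` (U \<times> {..<r})"
      by force
  qed
  then have "card (star2 n r f U) \<le> card ((\<lambda>h. fst (f h)) ` (U \<times> {..<r}))"
    using U by (intro card_mono) auto
  also have "\<dots> \<le> card (U \<times> {..<r})"
    using U by (intro card_image_le) auto
  finally show ?thesis
    by (simp add: card_cartesian_product mult.commute)
qed

lemma prob_event_E_eq_0:
  assumes "even (r * n)" "real (r * m) < x"
  shows "measure_pmf.prob (config_model n r) (event_E n r m x) = 0"
proof -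
  have "pairings n r \<inter> event_E n r m x = {}"
  proof (intro equals0I)
    fix f assume "f \<in> pairings n r \<inter> event_E n r m x"
    then obtain U where "f \<in> perfect_matchings (half_edges n r)" "U \<subseteq> {1..n}" "card U = m"
        "x \<le> real (card (star2 n r f U))"
      by (auto simp: pairings_eq_perfect_matchings event_E_def)
    moreover from this have "card (star2 n r f U) \<le> r * m"
      using card_star2_le finite_subset by fastforce
    ultimately show False
      using assms(2) of_nat_mono by fastforce
  qed
  then show ?thesis
    using measure_Int_set_pmf[of "config_model n r" "event_E n r m x"]
    by (simp add: set_pmf_config_model[OF assms(1)] Int_commute)
qed

section \<open>Witnesses for large second neighbourhoods\<close>

lemma star2_incident_half_edges:
  assumes "y \<in> star2 n r f U"
  shows "\<exists>I \<subseteq> {..<r}. card I = 2 \<and> (\<forall>i\<in>I. f (y, i) \<in> U \<times> {..<r})"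
proof -
  obtain x z where xz: "x \<in> U" "z \<in> U" "x \<noteq> z" "adj n r f y x" "adj n r f y z"
    using assms unfolding star2_def by blast
  obtain i a j b where ij: "i < r" "a < r" "f (y, i) = (x, a)" "j < r" "b < r" "f (y, j) = (z, b)"
    using xz(4,5) unfolding adj_def by blast
  moreover have "i \<noteq> j"
    using ij(3,6) xz(3) by auto
  ultimately show ?thesis
    using xz(1,2) by (intro exI[of _ "{i, j}"]) auto
qed

lemma star2_incident_half_edge_set:
  assumes W: "finite W" "W \<subseteq> star2 n r f U"
  shows "\<exists>H \<subseteq> W \<times> {..<r}. card H = 2 * card W \<and> f ` H \<subseteq> U \<times> {..<r} \<and>
    card (H \<inter> U \<times> UNIV) = 2 * card (W \<inter> U)"
proof -
  have "\<forall>w\<in>W. \<exists>I. I \<subseteq> {..<r} \<and> card I = 2 \<and> (\<forall>i\<in>I. f (w, i) \<in> U \<times> {..<r})"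
    using W(2) star2_incident_half_edges by blast
  then obtain I where I: "\<And>w. w \<in> W \<Longrightarrow> I w \<subseteq> {..<r}" "\<And>w. w \<in> W \<Longrightarrow> card (I w) = 2"
      "\<And>w i. w \<in> W \<Longrightarrow> i \<in> I w \<Longrightarrow> f (w, i) \<in> U \<times> {..<r}"
    by metis
  have card_Sigma: "card (Sigma X I) = 2 * card X" if X: "X \<subseteq> W" for X
  proof -
    have "card (Sigma X I) = (\<Sum>w\<in>X. card (I w))"
      using X finite_subset[OF X W(1)] I(1) by (intro card_SigmaI) (auto intro: finite_subset)
    also have "\<dots> = (\<Sum>w\<in>X. 2)"
      using X I(2) by (intro sum.cong) auto
    finally show ?thesis by simp
  qed
  have "Sigma W I \<inter> U \<times> UNIV = Sigma (W \<inter> U) I"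
    by blast
  moreover have "Sigma W I \<subseteq> W \<times> {..<r}" "f ` Sigma W I \<subseteq> U \<times> {..<r}"
    using I(1,3) by blast+
  ultimately show ?thesis
    using card_Sigma[of W] card_Sigma[of "W \<inter> U"] by (intro exI[of _ "Sigma W I"]) auto
qed

lemma star2_closed_half_edge_set:
  assumes f: "f \<in> perfect_matchings (half_edges n r)" and U: "U \<subseteq> {1..n}"
    and W: "finite W" "W \<subseteq> star2 n r f U"
  shows "\<exists>T \<subseteq> (U \<union> W) \<times> {..<r}. (\<forall>h\<in>T. f h \<in> T \<and> f h \<noteq> h \<and> f (f h) = h) \<and>
    4 * card W \<le> card T + 2 * card (W \<inter> U)"
proof -
  obtain H where H: "H \<subseteq> W \<times> {..<r}" "card H = 2 * card W" "f ` H \<subseteq> U \<times> {..<r}"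
      "card (H \<inter> U \<times> UNIV) = 2 * card (W \<inter> U)"
    using star2_incident_half_edge_set[OF W] by auto
  let ?T = "H \<union> f ` H"
  have "W \<subseteq> {1..n}"
    using W(2) by (auto simp: star2_def)
  have "W \<times> {..<r} \<subseteq> (U \<union> W) \<times> {..<r}" "U \<times> {..<r} \<subseteq> (U \<union> W) \<times> {..<r}"
    by auto
  then have T_sub: "?T \<subseteq> (U \<union> W) \<times> {..<r}"
    using H(1,3) by (meson Un_least order_trans)
  then have "?T \<subseteq> half_edges n r"
    using U \<open>W \<subseteq> {1..n}\<close> by (auto simp: half_edges_def)
  then have "\<forall>h\<in>?T. f h \<in> ?T \<and> f h \<noteq> h \<and> f (f h) = h"
    using f unfolding perfect_matchings_def by (auto simp: perfect_matchings_involution[OF f])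
  \<comment> \<open>only half-edges at \<open>W \<inter> U\<close> can lie in both \<open>H\<close> and \<open>f ` H\<close>\<close>
  moreover have "2 * card H \<le> card ?T + card (H \<inter> U \<times> UNIV)"
    using perfect_matchings_inj[OF f] H(3) finite_subset[OF H(1)] W(1)
    by (intro card_Un_image_ge) auto
  ultimately show ?thesis
    using T_sub H(2,4) by (intro exI[of _ ?T]) auto
qed

definition star2_witnesses ::
    "nat \<Rightarrow> nat \<Rightarrow> nat \<Rightarrow> nat \<Rightarrow> (nat set \<times> ((nat \<times> nat) \<times> (nat \<times> nat)) set) set" where
  "star2_witnesses n r m k =
    (SIGMA S:{S. S \<subseteq> {1..n} \<and> card S \<le> m + k}.
       {M. M \<subseteq> (S \<times> {..<r}) \<times> (S \<times> {..<r}) \<and> disjoint_pairs M \<and> card M = card S + (k - m)})"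

lemma star2_witness_matching:
  assumes f: "f \<in> perfect_matchings (half_edges n r)" and U: "U \<subseteq> {1..n}" "card U = m"
    and k: "m \<le> k" "k \<le> card (star2 n r f U)"
  shows "\<exists>(S, M)\<in>star2_witnesses n r m k. f \<in> matchings_containing (half_edges n r) M"
proof -
  have "finite (star2 n r f U)"
    by (simp add: star2_def)
  then obtain W where W: "W \<subseteq> star2 n r f U" "card W = k" "finite W"
    using obtain_subset_with_card_n[OF k(2)] by (metis finite_subset)
  then obtain T where T: "T \<subseteq> (U \<union> W) \<times> {..<r}" "\<forall>h\<in>T. f h \<in> T \<and> f h \<noteq> h \<and> f (f h) = h"
      "4 * k \<le> card T + 2 * card (W \<inter> U)"
    using star2_closed_half_edge_set[OF f U(1) W(3,1)] by auto
  have finite_U: "finite U"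
    using U(1) finite_subset by blast
  have "finite T"
    using finite_subset[OF T(1)] finite_U W(3) by blast
  then obtain M0 where M0: "M0 \<subseteq> T \<times> T" "disjoint_pairs M0" "card T = 2 * card M0"
      "\<forall>(a, b)\<in>M0. f a = b"
    using involution_orbit_pairs[OF _ T(2)] by blast
  let ?S = "U \<union> W"
  have "card ?S = m + card (W - U)"
    using card_Un_disjoint[of U "W - U"] finite_U W(3) U(2) by (simp add: Un_Diff_cancel)
  moreover have "card (W \<inter> U) + card (W - U) = k"
    using card_Int_Diff[OF W(3), of U] W(2) by simp
  ultimately have "card ?S + (k - m) \<le> card M0" "card ?S \<le> m + k"
    using T(3) M0(3) k(1) by linarith+
  then obtain M where M: "M \<subseteq> M0" "card M = card ?S + (k - m)"
    using obtain_subset_with_card_n by metis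
  have "?S \<subseteq> {1..n}"
    using U(1) W(1) by (auto simp: star2_def)
  moreover have "M \<subseteq> (?S \<times> {..<r}) \<times> (?S \<times> {..<r})"
    using M(1) M0(1) T(1) by blast
  moreover have "f \<in> matchings_containing (half_edges n r) M"
    using f M(1) M0(4) by (auto simp: matchings_containing_def)
  ultimately show ?thesis
    using \<open>card ?S \<le> m + k\<close> disjoint_pairs_subset[OF M0(2) M(1)] M(2)
    by (intro bexI[of _ "(?S, M)"]) (auto simp: star2_witnesses_def)
qed

lemma finite_star2_witnesses: "finite (star2_witnesses n r m k)"
proof (rule finite_subset)
  show "star2_witnesses n r m k \<subseteq> Pow {1..n} \<times> Pow (half_edges n r \<times> half_edges n r)"
    by (auto simp: star2_witnesses_def half_edges_def)
qed (simp add: half_edges_def)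

lemma event_E_subset_star2_witnesses:
  assumes "m \<le> k"
  shows "pairings n r \<inter> event_E n r m k \<subseteq>
    (\<Union>(S, M)\<in>star2_witnesses n r m k. matchings_containing (half_edges n r) M)"
proof
  fix f assume "f \<in> pairings n r \<inter> event_E n r m k"
  then obtain U where "f \<in> perfect_matchings (half_edges n r)" "U \<subseteq> {1..n}" "card U = m"
      "k \<le> card (star2 n r f U)"
    by (auto simp: pairings_eq_perfect_matchings event_E_def)
  from star2_witness_matching[OF this(1-3) assms this(4)]
  show "f \<in> (\<Union>(S, M)\<in>star2_witnesses n r m k. matchings_containing (half_edges n r) M)"
    by auto
qed

lemma prob_event_E_le_witness_sum:
  assumes ev: "even (r * n)" and k: "m \<le> k" "8 * k \<le> n * r"
  shows "measure_pmf.prob (config_model n r) (event_E n r m k)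
    \<le> (\<Sum>(S, M)\<in>star2_witnesses n r m k. (2 / (real n * real r)) ^ card M)"
proof -
  let ?A = "half_edges n r" and ?W = "star2_witnesses n r m k" and ?p = "config_model n r"
  have A: "finite ?A" "even (card ?A)"
    using ev by (simp_all add: half_edges_def card_half_edges mult.commute)
  have "measure_pmf.prob ?p (event_E n r m k) = measure_pmf.prob ?p (pairings n r \<inter> event_E n r m k)"
    using measure_Int_set_pmf[of ?p "event_E n r m k"]
    by (simp add: set_pmf_config_model[OF ev] Int_commute)
  also have "\<dots> \<le> measure_pmf.prob ?p (\<Union>(S, M)\<in>?W. matchings_containing ?A M)"
    using event_E_subset_star2_witnesses[OF k(1)] by (intro measure_pmf.finite_measure_mono) auto
  also have "\<dots> = measure_pmf.prob ?p (\<Union>w\<in>?W. matchings_containing ?A (snd w))"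
    by (simp add: split_def)
  also have "\<dots> \<le> (\<Sum>w\<in>?W. measure_pmf.prob ?p (matchings_containing ?A (snd w)))"
    by (rule measure_pmf.finite_measure_subadditive_finite[OF finite_star2_witnesses]) auto
  also have "\<dots> = (\<Sum>(S, M)\<in>?W. measure_pmf.prob ?p (matchings_containing ?A M))"
    by (simp add: split_def)
  also have "\<dots> \<le> (\<Sum>(S, M)\<in>?W. (2 / (real n * real r)) ^ card M)"
  proof (rule sum_mono, clarify)
    fix S M assume "(S, M) \<in> ?W"
    then have S: "S \<subseteq> {1..n}" "card S \<le> m + k" and
      M: "M \<subseteq> (S \<times> {..<r}) \<times> (S \<times> {..<r})" "disjoint_pairs M" "card M = card S + (k - m)"
      by (auto simp: star2_witnesses_def)
    have "finite M"
      using M(1) finite_subset[OF S(1)] by (simp add: finite_subset)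
    moreover have "pair_support M \<subseteq> ?A"
      using M(1) S(1) by (auto simp: pair_support_def half_edges_def)
    moreover have "4 * card M \<le> card ?A"
      using M(3) S(2) k by (simp add: card_half_edges)
    ultimately show "measure_pmf.prob ?p (matchings_containing ?A M) \<le> (2 / (real n * real r)) ^ card M"
      using prob_matchings_containing_le[OF A _ M(2)]
      by (simp add: config_model_def pairings_eq_perfect_matchings card_half_edges)
  qed
  finally show ?thesis .
qed

lemma star2_witness_sum_le:
  fixes q :: real
  assumes "q \<ge> 0"
  shows "(\<Sum>(S, M)\<in>star2_witnesses n r m k. q ^ card M)
    \<le> (\<Sum>s\<le>m + k. real (n choose s) * real ((s * r)\<^sup>2 choose (s + (k - m))) * q ^ (s + (k - m)))"
proof -
  let ?t = "k - m"
  define Ms where "Ms S = {M. M \<subseteq> (S \<times> {..<r}) \<times> (S \<times> {..<r}) \<and> disjoint_pairs M \<and> card M = card S + ?t}"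
    for S :: "nat set"
  define Ss where "Ss = {S. S \<subseteq> {1..n} \<and> card S \<le> m + k}"
  have finite_Ss: "finite Ss"
    by (rule finite_subset[of _ "Pow {1..n}"]) (auto simp: Ss_def)
  have card_Ms: "card (Ms S) \<le> (card S * r)\<^sup>2 choose (card S + ?t)" if "S \<in> Ss" for S
  proof -
    let ?X = "(S \<times> {..<r}) \<times> (S \<times> {..<r})"
    have "finite S"
      using that finite_subset by (auto simp: Ss_def)
    then have "card (Ms S) \<le> card {M. M \<subseteq> ?X \<and> card M = card S + ?t}"
      by (intro card_mono) (auto simp: Ms_def intro: finite_subset[of _ "Pow ?X"])
    also have "\<dots> = card ?X choose (card S + ?t)"
      using \<open>finite S\<close> by (intro n_subsets) simp
    finally show ?thesis
      by (simp add: card_cartesian_product power2_eq_square)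
  qed
  have "(\<Sum>(S, M)\<in>star2_witnesses n r m k. q ^ card M) = (\<Sum>S\<in>Ss. \<Sum>M\<in>Ms S. q ^ card M)"
    unfolding star2_witnesses_def Ss_def[symmetric] Ms_def[symmetric]
    by (rule sum.Sigma[symmetric]) (use finite_Ss in \<open>auto simp: Ss_def Ms_def
      intro: finite_subset[of _ "Pow ((_ \<times> {..<r}) \<times> (_ \<times> {..<r}))"]\<close>)
  also have "\<dots> = (\<Sum>S\<in>Ss. real (card (Ms S)) * q ^ (card S + ?t))"
    by (simp add: Ms_def)
  also have "\<dots> \<le> (\<Sum>S\<in>Ss. real ((card S * r)\<^sup>2 choose (card S + ?t)) * q ^ (card S + ?t))"
    using card_Ms assms by (intro sum_mono mult_right_mono) auto
  also have "\<dots> = (\<Sum>s\<le>m + k. \<Sum>S\<in>{S \<in> Ss. card S = s}. real ((s * r)\<^sup>2 choose (s + ?t)) * q ^ (s + ?t))"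
    using finite_Ss by (subst sum.group[symmetric, where g = card]) (auto simp: Ss_def)
  also have "\<dots> = (\<Sum>s\<le>m + k. real (n choose s) * real ((s * r)\<^sup>2 choose (s + ?t)) * q ^ (s + ?t))"
  proof (rule sum.cong[OF refl])
    fix s assume "s \<in> {..m + k}"
    then have "{S \<in> Ss. card S = s} = {S. S \<subseteq> {1..n} \<and> card S = s}"
      by (auto simp: Ss_def)
    then show "(\<Sum>S\<in>{S \<in> Ss. card S = s}. real ((s * r)\<^sup>2 choose (s + ?t)) * q ^ (s + ?t)) =
        real (n choose s) * real ((s * r)\<^sup>2 choose (s + ?t)) * q ^ (s + ?t)"
      using n_subsets[of "{1..n}" s] by simp
  qed
  finally show ?thesis .
qed

section \<open>Estimating the union bound\<close>

lemma power_div_fact_le_exp: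
  fixes x :: real
  assumes "0 \<le> x"
  shows "x ^ k / fact k \<le> exp x"
proof -
  have "summable (\<lambda>n. x ^ n / fact n)"
    using summable_exp_generic[of x] by (simp add: divide_inverse_commute)
  then have "(\<Sum>n\<in>{k}. x ^ n / fact n) \<le> (\<Sum>n. x ^ n / fact n)"
    using assms by (intro sum_le_suminf) auto
  then show ?thesis
    by (simp add: exp_def divide_inverse_commute)
qed

lemma binomial_le_power_div_fact: "real (a choose b) \<le> real a ^ b / fact b"
proof -
  have "real (a choose b) * fact b \<le> real a ^ b"
    using binomial_fact_pow[of a b] of_nat_mono by fastforce
  then show ?thesis
    by (simp add: pos_le_divide_eq)
qed

lemma witness_term_le:
  assumes "n \<ge> 1" "r \<ge> 1"
  shows "real (n choose s) * real ((s * r)\<^sup>2 choose (s + t)) * (2 / (real n * real r)) ^ (s + t)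
    \<le> (2 * real r) ^ (s + t) * exp (2 * real s) * (real s / real n) ^ t"
proof -
  have "real (n choose s) * real ((s * r)\<^sup>2 choose (s + t)) * (2 / (real n * real r)) ^ (s + t)
      \<le> (real n ^ s / fact s) * (real ((s * r)\<^sup>2) ^ (s + t) / fact (s + t)) *
        (2 / (real n * real r)) ^ (s + t)"
    by (intro mult_right_mono mult_mono binomial_le_power_div_fact) auto
  also have "\<dots> = (2 * real r) ^ (s + t) * (real s ^ s / fact s * (real s ^ (s + t) / fact (s + t))) *
      (real s / real n) ^ t"
    using assms by (simp add: field_simps power_add power_mult_distrib power2_eq_square power_mult)
  also have "\<dots> \<le> (2 * real r) ^ (s + t) * (exp (real s) * exp (real s)) * (real s / real n) ^ t"
    by (intro mult_right_mono mult_left_mono mult_mono power_div_fact_le_exp) auto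
  also have "\<dots> = (2 * real r) ^ (s + t) * exp (2 * real s) * (real s / real n) ^ t"
    by (simp only: mult_2 exp_add)
  finally show ?thesis .
qed

text \<open>The factor \<open>2\<^bsup>r+2\<^esup>\<close> pays for the number of possible sizes \<open>|S|\<close> in the union bound.\<close>

definition witness_bound_base :: "nat \<Rightarrow> real" where
  "witness_bound_base r =
    2 ^ (r + 2) * (2 * real r) ^ (2 * r + 2) * exp (2 * (real r + 2)) * (real r + 2) ^ r"

lemma witness_bound_base_gt_1: "r \<ge> 1 \<Longrightarrow> witness_bound_base r > 1"
proof -
  assume "r \<ge> 1"
  then have "1 \<le> (2 * real r) ^ (2 * r + 2)"
    by (intro one_le_power) simp
  moreover have "(2 :: real) \<le> 2 ^ (r + 2)"
    using power_increasing[of 1 "r + 2" "2 :: real"] by simp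
  moreover have "1 \<le> exp (2 * (real r + 2))" "1 \<le> (real r + 2) ^ r"
    by (simp_all add: one_le_power)
  ultimately have "2 * 1 * 1 * 1 \<le> witness_bound_base r"
    unfolding witness_bound_base_def by (intro mult_mono) auto
  then show ?thesis by simp
qed

lemma witness_bound_base_power:
  "witness_bound_base r ^ m =
    2 ^ ((r + 2) * m) * (2 * real r) ^ ((2 * r + 2) * m) * exp (2 * (real r + 2) * real m) *
      (real r + 2) ^ (r * m)"
proof -
  have "exp (2 * (real r + 2) * real m) = exp (2 * (real r + 2)) ^ m"
    by (subst exp_of_nat_mult[symmetric]) (simp add: algebra_simps)
  then show ?thesis
    unfolding witness_bound_base_def power_mult_distrib power_mult by simp
qed

lemma ratio_power_le_powr:
  fixes \<eta> :: real
  assumes m: "1 \<le> m" "(r + 2) * m \<le> n"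
    and st: "s \<le> (r + 2) * m" "\<eta> * m \<le> t" and \<eta>: "0 < \<eta>" "\<eta> \<le> r"
  shows "(real s / real n) ^ t \<le> (real r + 2) ^ (r * m) * (real m / real n) powr (\<eta> * m)"
proof -
  have "real ((r + 2) * m) \<le> real n" "real s \<le> real ((r + 2) * m)"
    using m(2) st(1) by (simp_all only: of_nat_le_iff)
  then have le: "(real r + 2) * real m \<le> real n" "real s \<le> (real r + 2) * real m"
    by (simp_all add: algebra_simps)
  define y where "y = (real r + 2) * real m / real n"
  have "0 < (real r + 2) * real m"
    using m(1) by simp
  then have "0 < real n"
    using le(1) by linarith
  then have y: "0 < y" "y \<le> 1"
    using m(1) le(1) by (simp_all add: y_def)
  have "(real s / real n) ^ t \<le> y ^ t"
    using le(2) unfolding y_def by (intro power_mono divide_right_mono) simp_all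
  also have "\<dots> = y powr real t"
    using y by (simp add: powr_realpow)
  also have "\<dots> \<le> y powr (\<eta> * m)"
    using y st(2) by (intro powr_mono') auto
  also have "\<dots> = (real r + 2) powr (\<eta> * m) * (real m / real n) powr (\<eta> * m)"
    unfolding y_def by (simp add: powr_mult[symmetric])
  also have "\<dots> \<le> (real r + 2) ^ (r * m) * (real m / real n) powr (\<eta> * m)"
  proof (rule mult_right_mono)
    have "(real r + 2) powr (\<eta> * m) \<le> (real r + 2) powr (real (r * m))"
      using \<eta> by (intro powr_mono) (auto intro: mult_right_mono)
    also have "\<dots> = (real r + 2) ^ (r * m)"
      by (rule powr_realpow) simp
    finally show "(real r + 2) powr (\<eta> * m) \<le> (real r + 2) ^ (r * m)" .
  qed simp
  finally show ?thesis .
qed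

lemma witness_term_le_uniform:
  fixes \<eta> :: real
  assumes r: "1 \<le> r" and m: "1 \<le> m" "(r + 2) * m \<le> n"
    and st: "s \<le> (r + 2) * m" "t \<le> r * m" "\<eta> * m \<le> t" and \<eta>: "0 < \<eta>" "\<eta> \<le> r"
  shows "real (n choose s) * real ((s * r)\<^sup>2 choose (s + t)) * (2 / (real n * real r)) ^ (s + t)
    \<le> (2 * real r) ^ ((2 * r + 2) * m) * exp (2 * (real r + 2) * real m) *
      ((real r + 2) ^ (r * m) * (real m / real n) powr (\<eta> * m))"
proof -
  have "m \<le> (r + 2) * m"
    by simp
  then have "1 \<le> n"
    using m by linarith
  then have "real (n choose s) * real ((s * r)\<^sup>2 choose (s + t)) * (2 / (real n * real r)) ^ (s + t)
      \<le> (2 * real r) ^ (s + t) * exp (2 * real s) * (real s / real n) ^ t"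
    using witness_term_le r by blast
  also have "\<dots> \<le> (2 * real r) ^ ((2 * r + 2) * m) * exp (2 * (real r + 2) * real m) *
      ((real r + 2) ^ (r * m) * (real m / real n) powr (\<eta> * m))"
  proof (intro mult_mono ratio_power_le_powr)
    show "(2 * real r) ^ (s + t) \<le> (2 * real r) ^ ((2 * r + 2) * m)"
      using r st(1,2) by (intro power_increasing) (auto simp: algebra_simps)
    have "real s \<le> real ((r + 2) * m)"
      using st(1) by (simp only: of_nat_le_iff)
    then show "exp (2 * real s) \<le> exp (2 * (real r + 2) * real m)"
      by (simp add: algebra_simps)
  qed (use m st \<eta> in auto)
  finally show ?thesis .
qed

lemma nat_ceiling_threshold_bounds:
  fixes \<eta> :: real
  assumes "0 < \<eta>" "\<eta> \<le> r"
  shows "m \<le> nat \<lceil>(1 + \<eta>) * m\<rceil>" "\<eta> * m \<le> real (nat \<lceil>(1 + \<eta>) * m\<rceil> - m)"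
    "nat \<lceil>(1 + \<eta>) * m\<rceil> \<le> (r + 1) * m"
proof -
  let ?k = "nat \<lceil>(1 + \<eta>) * m\<rceil>"
  have "real m \<le> (1 + \<eta>) * m"
    using assms(1) by (simp add: algebra_simps)
  moreover have k_ge: "(1 + \<eta>) * m \<le> real ?k"
    by (rule real_nat_ceiling_ge)
  ultimately show "m \<le> ?k"
    by linarith
  then show "\<eta> * m \<le> real (?k - m)"
    using k_ge by (simp add: of_nat_diff algebra_simps)
  have "(1 + \<eta>) * m \<le> real ((r + 1) * m)"
    using mult_right_mono[OF assms(2), of "real m"] by (simp add: algebra_simps)
  then show "?k \<le> (r + 1) * m"
    by simp
qed

lemma prob_event_E_le_power:
  fixes \<eta> :: real
  assumes ev: "even (r * n)" and r: "1 \<le> r" and m: "1 \<le> m" "8 * (r + 1) * m \<le> n"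
    and \<eta>: "0 < \<eta>" "\<eta> \<le> r"
  shows "measure_pmf.prob (config_model n r) (event_E n r m ((1 + \<eta>) * m))
    \<le> witness_bound_base r ^ m * (real m / real n) powr (\<eta> * m)"
proof -
  define k where "k = nat \<lceil>(1 + \<eta>) * m\<rceil>"
  have k: "m \<le> k" "\<eta> * m \<le> real (k - m)" "k \<le> (r + 1) * m"
    unfolding k_def using \<eta> by (rule nat_ceiling_threshold_bounds)+
  then have "8 * k \<le> 8 * (r + 1) * m"
    by (metis mult.assoc mult_le_mono2)
  also have "\<dots> \<le> n * r"
    using le_trans[OF m(2) mult_le_mono2[OF r, of n, unfolded mult_1_right]] .
  finally have k_le: "m + k \<le> (r + 2) * m" "k - m \<le> r * m" "8 * k \<le> n * r"
    using k(3) by (auto simp: algebra_simps)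
  have "(r + 2) * m \<le> n"
    using m(2) by (simp add: algebra_simps)
  define B where "B = (2 * real r) ^ ((2 * r + 2) * m) * exp (2 * (real r + 2) * real m) *
      ((real r + 2) ^ (r * m) * (real m / real n) powr (\<eta> * m))"
  have "measure_pmf.prob (config_model n r) (event_E n r m ((1 + \<eta>) * m))
      = measure_pmf.prob (config_model n r) (event_E n r m k)"
    by (simp add: k_def event_E_ceiling[of _ _ _ "(1 + \<eta>) * m"])
  also have "\<dots> \<le> (\<Sum>(S, M)\<in>star2_witnesses n r m k. (2 / (real n * real r)) ^ card M)"
    using prob_event_E_le_witness_sum[OF ev k(1) k_le(3)] .
  also have "\<dots> \<le> (\<Sum>s\<le>m + k. real (n choose s) * real ((s * r)\<^sup>2 choose (s + (k - m))) *
      (2 / (real n * real r)) ^ (s + (k - m)))"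
    by (rule star2_witness_sum_le) simp
  also have "\<dots> \<le> (\<Sum>s\<le>m + k. B)"
    unfolding B_def using m(1) \<open>(r + 2) * m \<le> n\<close> r k(2) k_le \<eta>
    by (intro sum_mono witness_term_le_uniform) (auto intro: order_trans)
  also have "\<dots> = real (m + k + 1) * B"
    by simp
  also have "\<dots> \<le> 2 ^ ((r + 2) * m) * B"
  proof (rule mult_right_mono)
    have "m + k + 1 \<le> 2 ^ ((r + 2) * m)"
      using k_le(1) less_exp[of "(r + 2) * m"] by linarith
    then show "real (m + k + 1) \<le> 2 ^ ((r + 2) * m)"
      using of_nat_mono by fastforce
    show "0 \<le> B"
      by (simp add: B_def)
  qed
  also have "\<dots> = witness_bound_base r ^ m * (real m / real n) powr (\<eta> * m)"
    by (simp add: B_def witness_bound_base_power ac_simps)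
  finally show ?thesis .
qed

lemma power_mult_powr_le_powr:
  fixes D x \<eta> \<epsilon> :: real
  assumes D: "1 < D" and x: "0 < x" "x \<le> 1" "x \<le> D powr (- 2 / \<eta>)"
    and \<eta>: "0 < \<eta>" and \<epsilon>: "\<epsilon> \<le> \<eta> / 2"
  shows "D ^ m * x powr (\<eta> * m) \<le> x powr (\<epsilon> * m)"
proof -
  have "x powr (\<eta> / 2) \<le> (D powr (- 2 / \<eta>)) powr (\<eta> / 2)"
    using x \<eta> by (intro powr_mono2) auto
  also have "\<dots> = 1 / D"
    using \<eta> D by (simp add: powr_powr powr_neg_one)
  finally have "D * x powr (\<eta> / 2) \<le> 1"
    using D by (simp add: field_simps)
  have "D ^ m * x powr (\<eta> * m) = (D * x powr (\<eta> / 2)) ^ m * x powr (\<eta> * m / 2)"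
    using x by (simp add: power_mult_distrib powr_power powr_add[symmetric] algebra_simps)
  also have "\<dots> \<le> 1 * x powr (\<eta> * m / 2)"
    using \<open>D * x powr (\<eta> / 2) \<le> 1\<close> D by (intro mult_right_mono power_le_one) auto
  also have "\<dots> \<le> x powr (\<epsilon> * m)"
    using x mult_right_mono[OF \<epsilon>, of "real m"] by (subst mult_1_left, intro powr_mono') auto
  finally show ?thesis .
qed

definition star2_eps :: "nat \<Rightarrow> real \<Rightarrow> real" where
  "star2_eps r \<eta> = witness_bound_base r powr (- 2 / \<eta>) / (8 * (real r + 1))"

lemma star2_eps_pos: "1 \<le> r \<Longrightarrow> 0 < star2_eps r \<eta>"
  using witness_bound_base_gt_1[of r] by (simp add: star2_eps_def)

lemma strict_mono_on_star2_eps: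
  assumes "1 \<le> r"
  shows "strict_mono_on {0<..} (star2_eps r)"
proof (rule strict_mono_onI)
  fix a b :: real assume "a \<in> {0<..}" "b \<in> {0<..}" "a < b"
  then have "- 2 / a < - 2 / b"
    by (simp add: divide_strict_left_mono)
  then show "star2_eps r a < star2_eps r b"
    unfolding star2_eps_def using witness_bound_base_gt_1[OF assms]
    by (intro divide_strict_right_mono powr_less_mono) auto
qed

lemma star2_eps_le:
  assumes "1 \<le> r" "0 < \<eta>"
  shows "star2_eps r \<eta> \<le> witness_bound_base r powr (- 2 / \<eta>)"
    and "star2_eps r \<eta> \<le> 1 / (8 * (real r + 1))"
proof -
  have "witness_bound_base r powr (- 2 / \<eta>) \<le> 1"
    using powr_mono[of "- 2 / \<eta>" 0 "witness_bound_base r"] witness_bound_base_gt_1[OF assms(1)]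
      assms(2) by simp
  then show "star2_eps r \<eta> \<le> witness_bound_base r powr (- 2 / \<eta>)"
    and "star2_eps r \<eta> \<le> 1 / (8 * (real r + 1))"
    unfolding star2_eps_def
    by (simp add: field_simps mult_left_mono[of 1 "8 * real r + 8"], intro divide_right_mono) auto
qed

lemma prob_event_E_le_star2_eps:
  fixes \<eta> :: real
  assumes r: "1 \<le> r" and \<eta>: "0 < \<eta>" and ev: "even (r * n)" and m: "real m \<le> star2_eps r \<eta> * real n"
  shows "measure_pmf.prob (config_model n r) (event_E n r m ((1 + \<eta>) * real m))
    \<le> exp (- (\<eta>\<^sup>2 / (8 * real r)) * real m * ln (real n / real m))"
proof -
  consider (zero) "m = 0" | (large) "0 < m" "real r < \<eta>" | (small) "0 < m" "\<eta> \<le> real r"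
    by linarith
  then show ?thesis
  proof cases
    case zero
    then show ?thesis by simp
  next
    case large
    then have "real (r * m) < (1 + \<eta>) * real m"
      by (simp add: mult_strict_right_mono)
    then show ?thesis
      using prob_event_E_eq_0[OF ev] by simp
  next
    case small
    define D where "D = witness_bound_base r"
    define x where "x = real m / real n"
    have eps: "star2_eps r \<eta> \<le> D powr (- 2 / \<eta>)" "star2_eps r \<eta> \<le> 1 / (8 * (real r + 1))"
      using star2_eps_le[OF r \<eta>] by (simp_all add: D_def)
    have n: "0 < real n"
      using m small(1) star2_eps_pos[OF r, of \<eta>] by (cases "n = 0") auto
    have "real m \<le> D powr (- 2 / \<eta>) * real n"
      using m mult_right_mono[OF eps(1), of "real n"] by simp
    moreover have "real m \<le> real n / (8 * (real r + 1))"
      using m mult_right_mono[OF eps(2), of "real n"] by simp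
    then have "real (8 * (r + 1) * m) \<le> real n"
      by (simp add: field_simps)
    then have "8 * (r + 1) * m \<le> n"
      by (simp only: of_nat_le_iff)
    ultimately have x: "0 < x" "x \<le> 1" "x \<le> D powr (- 2 / \<eta>)"
      using small(1) n by (auto simp: x_def field_simps)
    have "measure_pmf.prob (config_model n r) (event_E n r m ((1 + \<eta>) * real m))
        \<le> D ^ m * x powr (\<eta> * m)"
      unfolding D_def x_def using small \<open>8 * (r + 1) * m \<le> n\<close> \<eta>
      by (intro prob_event_E_le_power[OF ev r]) auto
    also have "\<dots> \<le> x powr (\<eta>\<^sup>2 / (8 * real r) * m)"
      using witness_bound_base_gt_1[OF r] x \<eta> small r unfolding D_def
      by (intro power_mult_powr_le_powr) (auto simp: field_simps power2_eq_square)
    also have "\<dots> = exp (- (\<eta>\<^sup>2 / (8 * real r)) * real m * ln (real n / real m))"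
    proof -
      have "ln x = - ln (real n / real m)"
        using n small(1) by (simp add: x_def ln_div)
      then show ?thesis
        using x(1) by (simp add: powr_def)
    qed
    finally show ?thesis .
  qed
qed

theorem proposition1:
  fixes r :: nat
  assumes "r \<ge> 3"
  shows "\<exists>(eps3 :: real \<Rightarrow> real) (C3 :: real).
           strict_mono_on {0<..} eps3 \<and> (\<forall>\<eta>>0. eps3 \<eta> > 0) \<and>
           (\<forall>\<eta>>0. \<forall>n m :: nat. even (r * n) \<longrightarrow> real m \<le> eps3 \<eta> * real n \<longrightarrow>
              measure_pmf.prob (config_model n r) (event_E n r m ((1 + \<eta>) * real m))
                \<le> C3 * exp (- (\<eta>^2 / (8 * real r)) * real m * ln (real n / real m)))"
proof -
  have r: "1 \<le> r"
    using assms by simp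
  show ?thesis
    using strict_mono_on_star2_eps[OF r] star2_eps_pos[OF r] prob_event_E_le_star2_eps[OF r]
    by (intro exI[of _ "star2_eps r"] exI[of _ 1]) auto
qed

end
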